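(* Let $N = \sqrt{\lfloor n/2\rfloor \lceil n/2\rceil}$. The minimum value of the normalized Graovac-Ghorbani index over the set of all connected bipartite graphs $G$ on $n \ge 8$ vertices (which equals the minimum of $\mathrm{GG}(G)/\sqrt{n-2}$ over the same set) is $$\begin{cases} 2 & \text{for } n \ge 8 \text{ even},\\ (n-1)^{-1/2} + (n-1)N^{-1} & \text{for } 9 \le n \le 15 \text{ odd},\\ (n+1)N^{-1} & \text{for } n \ge 17 \text{ odd}.\end{cases}$$
   Context: All graphs are finite, simple, undirected and connected. For an edge $uv$ of a graph $G$, let $n_u = |\{w \in V(G) : d(w,u) < d(w,v)\}|$ and $n_v = |\{w \in V(G) : d(w,v) < d(w,u)\}|$, where $d$ is the shortest-path distance. The Graovac-Ghorbani index is $\mathrm{GG}(G) = \sum_{uv \in E(G)} \sqrt{\frac{n_u + n_v - 2}{n_u n_v}}$ and the normalized Graovac-Ghorbani index is $\mathrm{NGG}(G) = \sum_{uv \in E(G)} \frac{1}{\sqrt{n_u n_v}}$. *)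

theory Defs
  imports Complex_Main
begin

text \<open>A simple graph on the vertex set {0..<n}, given by a symmetric irreflexive
  edge relation E (both orientations (u,v) and (v,u) of every edge are in E).\<close>
definition graph_on :: "nat \<Rightarrow> (nat \<times> nat) set \<Rightarrow> bool" where
  "graph_on n E \<longleftrightarrow> E \<subseteq> {..<n} \<times> {..<n} \<and> sym E \<and> irrefl E"

definition connected_graph :: "nat \<Rightarrow> (nat \<times> nat) set \<Rightarrow> bool" where
  "connected_graph n E \<longleftrightarrow> (\<forall>u<n. \<forall>v<n. (u, v) \<in> E\<^sup>*)"

definition bipartite_graph :: "(nat \<times> nat) set \<Rightarrow> bool" where
  "bipartite_graph E \<longleftrightarrow> (\<exists>S. \<forall>(u, v)\<in>E. (u \<in> S) \<noteq> (v \<in> S))"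

definition gdist :: "(nat \<times> nat) set \<Rightarrow> nat \<Rightarrow> nat \<Rightarrow> nat" where
  "gdist E u v = (LEAST k. (u, v) \<in> E ^^ k)"

definition nclose :: "nat \<Rightarrow> (nat \<times> nat) set \<Rightarrow> nat \<Rightarrow> nat \<Rightarrow> nat" where
  "nclose n E u v = card {w \<in> {..<n}. gdist E w u < gdist E w v}"

text \<open>Each undirected edge is counted once, via its orientation with u < v.\<close>
definition NGG :: "nat \<Rightarrow> (nat \<times> nat) set \<Rightarrow> real" where
  "NGG n E = (\<Sum>(u, v)\<in>{(u, v). (u, v) \<in> E \<and> u < v}.
      1 / sqrt (real (nclose n E u v) * real (nclose n E v u)))"

definition GG :: "nat \<Rightarrow> (nat \<times> nat) set \<Rightarrow> real" where
  "GG n E = (\<Sum>(u, v)\<in>{(u, v). (u, v) \<in> E \<and> u < v}.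
      sqrt ((real (nclose n E u v) + real (nclose n E v u) - 2)
            / (real (nclose n E u v) * real (nclose n E v u))))"

definition min_NGG_bip :: "nat \<Rightarrow> real" where
  "min_NGG_bip n =
    (let N = sqrt (real (n div 2) * real ((n + 1) div 2)) in
     if even n then 2
     else if n \<le> 15 then 1 / sqrt (real n - 1) + (real n - 1) / N
     else (real n + 1) / N)"

end

theory Submission
  imports Defs
begin

text \<open>In a connected bipartite graph every vertex is strictly closer to one end of an edge \<open>uv\<close>
  than to the other, so \<open>n\<^sub>u + n\<^sub>v = n\<close>. Hence every edge term \<open>1 / sqrt (n\<^sub>u n\<^sub>v)\<close> is at least
  \<open>1 / N\<close>, a pendant edge contributes \<open>1 / sqrt (n - 1)\<close>, and \<open>GG = sqrt (n - 2) NGG\<close>.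
  A connected graph with \<open>m\<close> edges and \<open>L\<close> leaves has \<open>m \<ge> n - 1\<close> and \<open>2m + L \<ge> 2n\<close>,
  which already yields the bound except in two situations: for odd \<open>n\<close> and \<open>m = n\<close>, where
  bipartiteness forces a leaf, and for odd \<open>n \<le> 13\<close> and a tree with two leaves, i.e. a path,
  whose edges next to the ends weigh \<open>1 / sqrt (2 (n - 2))\<close> and \<open>1 / sqrt (3 (n - 3))\<close>.
  The minimum is attained by the cycle \<open>C\<^sub>n\<close> for even \<open>n\<close>, and for odd \<open>n\<close> by \<open>C\<^sub>n\<^sub>-\<^sub>1\<close>
  with a pendant vertex (\<open>n \<le> 15\<close>) or with a twin of a cycle vertex (\<open>n \<ge> 17\<close>).\<close>

section \<open>Walks and distances\<close>

lemma gdist_le_relpow: "(u, v) \<in> E ^^ k \<Longrightarrow> gdist E u v \<le> k"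
  unfolding gdist_def by (rule Least_le)

lemma relpow_gdist: "(u, v) \<in> E\<^sup>* \<Longrightarrow> (u, v) \<in> E ^^ gdist E u v"
  unfolding gdist_def using rtrancl_power by (metis LeastI)

lemma gdist_self [simp]: "gdist E u u = 0"
  using gdist_le_relpow[where k = 0 and u = u and v = u] by simp

lemma gdist_pos: "(u, v) \<in> E\<^sup>* \<Longrightarrow> u \<noteq> v \<Longrightarrow> 0 < gdist E u v"
  using relpow_gdist[of u v E] by (cases "gdist E u v") auto

lemma gdist_edge_le: "(w, a) \<in> E\<^sup>* \<Longrightarrow> (a, b) \<in> E \<Longrightarrow> gdist E w b \<le> gdist E w a + 1"
proof -
  assume "(w, a) \<in> E\<^sup>*" "(a, b) \<in> E"
  then have "(w, b) \<in> E ^^ Suc (gdist E w a)" using relpow_gdist by auto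
  then show ?thesis using gdist_le_relpow by fastforce
qed

lemma relpow_odd_iff_crosses:
  assumes "\<forall>(u, v)\<in>E. (u \<in> S) \<noteq> (v \<in> S)" and "(w, u) \<in> E ^^ k"
  shows "odd k \<longleftrightarrow> (w \<in> S) \<noteq> (u \<in> S)"
  using assms(2)
proof (induction k arbitrary: u)
  case (Suc k)
  then obtain y where "(w, y) \<in> E ^^ k" "(y, u) \<in> E" by auto
  with Suc.IH[of y] assms(1) show ?case by auto
qed simp

lemma relpow_image:
  assumes "\<And>x y. (x, y) \<in> E \<Longrightarrow> (f x, f y) \<in> E'"
  shows "(a, b) \<in> E ^^ k \<Longrightarrow> (f a, f b) \<in> E' ^^ k"
proof (induction k arbitrary: b)
  case (Suc k)
  then obtain y where "(a, y) \<in> E ^^ k" "(y, b) \<in> E" by auto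
  with Suc.IH[of y] assms show ?case by auto
qed simp

lemma gdist_image_le:
  assumes "\<And>x y. (x, y) \<in> E \<Longrightarrow> (f x, f y) \<in> E'" and "(a, b) \<in> E\<^sup>*"
  shows "gdist E' (f a) (f b) \<le> gdist E a b"
  using gdist_le_relpow relpow_image[OF assms(1) relpow_gdist[OF assms(2)]] .

text \<open>If \<open>(u, v)\<close> is the only edge leaving \<open>X\<close>, a walk entering \<open>X\<close> traverses it from \<open>v\<close>
  to \<open>u\<close>, so it visits \<open>v\<close> before its end; dually, a walk leaving \<open>X\<close> visits \<open>u\<close> before its end.\<close>

lemma relpow_enter_through_cut_edge:
  assumes cut: "\<And>a b. (a, b) \<in> E \<Longrightarrow> a \<in> X \<Longrightarrow> b \<notin> X \<Longrightarrow> a = u \<and> b = v" and "sym E"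
  shows "(w, x) \<in> E ^^ k \<Longrightarrow> w \<notin> X \<Longrightarrow> x \<in> X \<Longrightarrow> \<exists>j<k. (w, v) \<in> E ^^ j"
proof (induction k arbitrary: x)
  case (Suc k)
  then obtain y where y: "(w, y) \<in> E ^^ k" "(y, x) \<in> E" by auto
  show ?case
  proof (cases "y \<in> X")
    case True
    with Suc.IH[OF y(1)] Suc.prems show ?thesis using less_SucI by blast
  next
    case False
    with cut[of x y] y(2) \<open>sym E\<close> Suc.prems have "y = v" by (meson symD)
    with y show ?thesis by blast
  qed
qed auto

lemma relpow_leave_through_cut_edge:
  assumes cut: "\<And>a b. (a, b) \<in> E \<Longrightarrow> a \<in> X \<Longrightarrow> b \<notin> X \<Longrightarrow> a = u \<and> b = v"
  shows "(x, w) \<in> E ^^ k \<Longrightarrow> x \<in> X \<Longrightarrow> w \<notin> X \<Longrightarrow> \<exists>j<k. (x, u) \<in> E ^^ j"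
proof (induction k arbitrary: w)
  case (Suc k)
  then obtain y where y: "(x, y) \<in> E ^^ k" "(y, w) \<in> E" by auto
  show ?case
  proof (cases "y \<in> X")
    case False
    with Suc.IH[OF y(1)] Suc.prems show ?thesis using less_SucI by blast
  next
    case True
    with cut[of y w] y(2) Suc.prems have "y = u" by blast
    with y show ?thesis by blast
  qed
qed auto

section \<open>Connected bipartite graphs\<close>

locale conn_bip_graph =
  fixes n :: nat and E :: "(nat \<times> nat) set" and S :: "nat set"
  assumes graph: "graph_on n E" and connected: "connected_graph n E"
    and bipartition: "\<forall>(u, v)\<in>E. (u \<in> S) \<noteq> (v \<in> S)" and three_le: "3 \<le> n"
begin

lemma edge_lt: "(a, b) \<in> E \<Longrightarrow> a < n \<and> b < n"
  using graph unfolding graph_on_def by auto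

lemma sym_E: "sym E"
  using graph unfolding graph_on_def by auto

lemma edge_sym: "(a, b) \<in> E \<Longrightarrow> (b, a) \<in> E"
  using sym_E by (meson symD)

lemma edge_neq: "(a, b) \<in> E \<Longrightarrow> a \<noteq> b"
  using graph unfolding graph_on_def irrefl_def by auto

lemma reachable: "a < n \<Longrightarrow> b < n \<Longrightarrow> (a, b) \<in> E\<^sup>*"
  using connected unfolding connected_graph_def by auto

lemma finite_E: "finite E"
proof (rule finite_subset)
  show "E \<subseteq> {..<n} \<times> {..<n}" using edge_lt by auto
qed simp

text \<open>By parity of walk lengths; this is where bipartiteness gives \<open>n\<^sub>u + n\<^sub>v = n\<close>.\<close>

lemma gdist_edge:
  assumes e: "(u, v) \<in> E" and w: "w < n"
  shows "gdist E w u \<noteq> gdist E w v"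
proof -
  have uv: "u < n" "v < n" using edge_lt[OF e] by auto
  have "odd (gdist E w u) \<longleftrightarrow> (w \<in> S) \<noteq> (u \<in> S)"
    using relpow_odd_iff_crosses[OF bipartition relpow_gdist[OF reachable[OF w uv(1)]]] .
  moreover have "odd (gdist E w v) \<longleftrightarrow> (w \<in> S) \<noteq> (v \<in> S)"
    using relpow_odd_iff_crosses[OF bipartition relpow_gdist[OF reachable[OF w uv(2)]]] .
  moreover have "(u \<in> S) \<noteq> (v \<in> S)" using bipartition e by auto
  ultimately show ?thesis by auto
qed

lemma nclose_add:
  assumes e: "(u, v) \<in> E"
  shows "nclose n E u v + nclose n E v u = n"
proof -
  let ?A = "{w \<in> {..<n}. gdist E w u < gdist E w v}"
  let ?B = "{w \<in> {..<n}. gdist E w v < gdist E w u}"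
  have "?A \<union> ?B = {..<n}"
    using gdist_edge[OF e] by (auto simp: nat_neq_iff)
  moreover have "?A \<inter> ?B = {}" by auto
  ultimately have "card ?A + card ?B = n"
    using card_Un_disjoint[of ?A ?B] by simp
  then show ?thesis unfolding nclose_def .
qed

lemma nclose_pos:
  assumes e: "(u, v) \<in> E"
  shows "1 \<le> nclose n E u v"
proof -
  have uv: "u < n" "v < n" using edge_lt[OF e] by auto
  then have "u \<in> {w \<in> {..<n}. gdist E w u < gdist E w v}"
    using gdist_pos[OF reachable[OF uv]] edge_neq[OF e] by auto
  then have "0 < card {w \<in> {..<n}. gdist E w u < gdist E w v}"
    by (intro card_gt_0_iff[THEN iffD2]) auto
  then show ?thesis unfolding nclose_def by simp
qed

lemma nclose_cut_edge:
  assumes X: "X \<subseteq> {..<n}" and "u \<in> X" "v \<notin> X" and e: "(u, v) \<in> E"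
    and cut: "\<And>a b. (a, b) \<in> E \<Longrightarrow> a \<in> X \<Longrightarrow> b \<notin> X \<Longrightarrow> a = u \<and> b = v"
  shows "nclose n E u v = card X"
proof -
  have uv: "u < n" "v < n" using edge_lt[OF e] by auto
  have "{w \<in> {..<n}. gdist E w u < gdist E w v} = X"
  proof (intro equalityI subsetI)
    fix w assume w: "w \<in> {w \<in> {..<n}. gdist E w u < gdist E w v}"
    show "w \<in> X"
    proof (rule ccontr)
      assume "w \<notin> X"
      with relpow_enter_through_cut_edge[OF cut sym_E relpow_gdist[OF reachable[of w u]]]
      obtain j where "j < gdist E w u" "(w, v) \<in> E ^^ j"
        using w uv \<open>u \<in> X\<close> by auto
      then have "gdist E w v < gdist E w u" using gdist_le_relpow by (metis le_less_trans)
      with w show False by auto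
    qed
  next
    fix x assume x: "x \<in> X"
    then have xn: "x < n" using X by auto
    from relpow_leave_through_cut_edge[OF cut relpow_gdist[OF reachable[OF xn uv(2)]] x \<open>v \<notin> X\<close>]
    obtain j where "j < gdist E x v" "(x, u) \<in> E ^^ j" by auto
    then have "gdist E x u < gdist E x v" using gdist_le_relpow by (metis le_less_trans)
    with xn show "x \<in> {w \<in> {..<n}. gdist E w u < gdist E w v}" by auto
  qed
  then show ?thesis unfolding nclose_def by simp
qed

lemma closed_set_card:
  assumes X: "X \<subseteq> {..<n}" and "x \<in> X"
    and closed: "\<And>a b. (a, b) \<in> E \<Longrightarrow> a \<in> X \<Longrightarrow> b \<in> X"
  shows "card X = n"
proof -
  have "{..<n} \<subseteq> X"
  proof
    fix w assume "w \<in> {..<n}"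
    then have "(x, w) \<in> E\<^sup>*" using reachable X \<open>x \<in> X\<close> by auto
    then show "w \<in> X" using \<open>x \<in> X\<close> closed by (induction rule: rtrancl_induct) auto
  qed
  with X show ?thesis by (simp add: subset_antisym)
qed

lemma gdist_involution:
  assumes inv: "\<And>x. x < n \<Longrightarrow> \<sigma> x < n \<and> \<sigma> (\<sigma> x) = x"
    and hom: "\<And>x y. (x, y) \<in> E \<Longrightarrow> (\<sigma> x, \<sigma> y) \<in> E"
    and "a < n" "b < n"
  shows "gdist E (\<sigma> a) (\<sigma> b) = gdist E a b"
proof (rule antisym)
  show "gdist E (\<sigma> a) (\<sigma> b) \<le> gdist E a b"
    by (intro gdist_image_le[where f = \<sigma>, OF hom reachable[OF assms(3,4)]])
  have "\<sigma> a < n" "\<sigma> b < n" using inv assms(3,4) by auto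
  then have "gdist E (\<sigma> (\<sigma> a)) (\<sigma> (\<sigma> b)) \<le> gdist E (\<sigma> a) (\<sigma> b)"
    by (intro gdist_image_le[where f = \<sigma>, OF hom reachable])
  then show "gdist E a b \<le> gdist E (\<sigma> a) (\<sigma> b)" using inv assms(3,4) by simp
qed

lemma nclose_involution:
  assumes inv: "\<And>x. x < n \<Longrightarrow> \<sigma> x < n \<and> \<sigma> (\<sigma> x) = x"
    and hom: "\<And>x y. (x, y) \<in> E \<Longrightarrow> (\<sigma> x, \<sigma> y) \<in> E"
    and u: "u < n" and v: "v < n"
  shows "nclose n E (\<sigma> u) (\<sigma> v) = nclose n E u v"
proof -
  let ?A = "{w \<in> {..<n}. gdist E w u < gdist E w v}"
  have "{w \<in> {..<n}. gdist E w (\<sigma> u) < gdist E w (\<sigma> v)} = \<sigma> ` ?A"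
  proof (intro equalityI subsetI)
    fix w assume w: "w \<in> {w \<in> {..<n}. gdist E w (\<sigma> u) < gdist E w (\<sigma> v)}"
    then have wn: "w < n" by simp
    have "\<sigma> w \<in> ?A"
      using w gdist_involution[OF inv hom, of "\<sigma> w"] inv[OF wn] u v by auto
    moreover have "w = \<sigma> (\<sigma> w)" using inv[OF wn] by simp
    ultimately show "w \<in> \<sigma> ` ?A" by blast
  next
    fix w assume "w \<in> \<sigma> ` ?A"
    then obtain y where "y \<in> ?A" "w = \<sigma> y" by auto
    then show "w \<in> {w \<in> {..<n}. gdist E w (\<sigma> u) < gdist E w (\<sigma> v)}"
      using gdist_involution[OF inv hom, of y] inv u v by auto
  qed
  moreover have "inj_on \<sigma> ?A"
    by (rule inj_on_inverseI[where g = \<sigma>]) (use inv in auto)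
  ultimately show ?thesis unfolding nclose_def by (simp add: card_image)
qed

end

section \<open>Edge terms of the normalized index\<close>

definition halves_prod :: "nat \<Rightarrow> nat" where
  "halves_prod n = (n div 2) * ((n + 1) div 2)"

lemma mult_le_halves_prod:
  fixes a b :: nat
  assumes "a + b = n"
  shows "a * b \<le> halves_prod n"
proof -
  define h h' where "h = int (n div 2)" and "h' = int ((n + 1) div 2)"
  have hh: "h + h' = int n" "h \<le> h'" "h' \<le> h + 1"
    unfolding h_def h'_def by linarith+
  have "int b = h + h' - int a" using assms hh(1) by simp
  then have "int a * int b = int a * (h + h' - int a)" by simp
  also have "\<dots> = h * h' - (h - int a) * (h' - int a)" by (simp add: algebra_simps)
  finally have "int a * int b = h * h' - (h - int a) * (h' - int a)" .
  moreover have "0 \<le> (h - int a) * (h' - int a)"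
    \<comment> \<open>no integer lies strictly between \<open>h = \<lfloor>n/2\<rfloor>\<close> and \<open>h' = \<lceil>n/2\<rceil>\<close>\<close>
    using hh(2,3) by (cases "int a \<le> h") (auto intro: mult_nonneg_nonneg mult_nonpos_nonpos)
  ultimately have "int (a * b) \<le> int (halves_prod n)"
    unfolding halves_prod_def h_def h'_def by simp
  then show ?thesis by linarith
qed

lemma pred_le_halves_prod: "n - 1 \<le> halves_prod n"
  using mult_le_halves_prod[of 1 "n - 1" n] by (cases n) auto

definition sort_pair :: "nat \<times> nat \<Rightarrow> nat \<times> nat" where
  "sort_pair e = (min (fst e) (snd e), max (fst e) (snd e))"

definition upper_edges :: "(nat \<times> nat) set \<Rightarrow> (nat \<times> nat) set" where
  "upper_edges E = {(u, v). (u, v) \<in> E \<and> u < v}"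

definition ngg_term :: "nat \<Rightarrow> (nat \<times> nat) set \<Rightarrow> nat \<times> nat \<Rightarrow> real" where
  "ngg_term n E e = 1 / sqrt (real (nclose n E (fst e) (snd e)) * real (nclose n E (snd e) (fst e)))"

lemma NGG_eq_sum_ngg_term: "NGG n E = sum (ngg_term n E) (upper_edges E)"
  unfolding NGG_def upper_edges_def ngg_term_def by (rule sum.cong) auto

lemma ngg_term_swap: "ngg_term n E (v, u) = ngg_term n E (u, v)"
  unfolding ngg_term_def by (simp add: mult.commute)

lemma ngg_term_sort_pair [simp]: "ngg_term n E (sort_pair e) = ngg_term n E e"
  unfolding sort_pair_def by (cases e) (auto simp: min_def max_def ngg_term_swap)

lemma sort_pair_eq_iff:
  "sort_pair (a, b) = sort_pair (c, d) \<longleftrightarrow> (a = c \<and> b = d) \<or> (a = d \<and> b = c)"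
  unfolding sort_pair_def by (auto simp: min_def max_def)

lemma sum_ge_subset_plus_bound:
  fixes f :: "'a \<Rightarrow> real"
  assumes "finite U" "F \<subseteq> U" "\<And>e. e \<in> U \<Longrightarrow> c \<le> f e"
  shows "sum f F + real (card U - card F) * c \<le> sum f U"
proof -
  have "finite F" using assms finite_subset by blast
  then have "sum f U = sum f F + sum f (U - F)" and "card (U - F) = card U - card F"
    using assms by (simp_all add: sum.subset_diff card_Diff_subset)
  moreover have "real (card (U - F)) * c \<le> sum f (U - F)"
    using sum_mono[of "U - F" "\<lambda>_. c" f] assms by auto
  ultimately show ?thesis by simp
qed

lemma count_weighted_mono:
  fixes a c :: real
  assumes "c \<le> a" "L\<^sub>0 \<le> L" "L \<le> m"
  shows "real L\<^sub>0 * a + real (m - L\<^sub>0) * c \<le> real L * a + real (m - L) * c"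
proof -
  have "real L * a + real (m - L) * c - (real L\<^sub>0 * a + real (m - L\<^sub>0) * c)
      = (real L - real L\<^sub>0) * (a - c)"
    using assms by (simp add: of_nat_diff algebra_simps)
  moreover have "0 \<le> (real L - real L\<^sub>0) * (a - c)" using assms by simp
  ultimately show ?thesis by linarith
qed

context conn_bip_graph
begin

lemma finite_upper_edges: "finite (upper_edges E)"
  using finite_E unfolding upper_edges_def by (auto intro: finite_subset)

lemma sort_pair_in_upper_edges: "e \<in> E \<Longrightarrow> sort_pair e \<in> upper_edges E"
proof (cases e)
  case (Pair a b)
  assume "e \<in> E"
  with Pair have "(a, b) \<in> E" "(b, a) \<in> E" "a \<noteq> b" using edge_sym edge_neq by auto
  then show ?thesis unfolding Pair sort_pair_def upper_edges_def by (auto simp: min_def max_def)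
qed

lemma ngg_term_ge: "e \<in> E \<Longrightarrow> 1 / sqrt (real (halves_prod n)) \<le> ngg_term n E e"
proof (cases e)
  case (Pair u v)
  assume e: "e \<in> E"
  have "nclose n E u v * nclose n E v u \<le> halves_prod n"
    using mult_le_halves_prod[OF nclose_add] e Pair by simp
  then have "sqrt (real (nclose n E u v) * real (nclose n E v u)) \<le> sqrt (real (halves_prod n))"
    by (metis of_nat_le_iff of_nat_mult real_sqrt_le_mono)
  moreover have "0 < real (nclose n E u v) * real (nclose n E v u)"
    using nclose_pos e edge_sym Pair by (simp add: Suc_le_eq)
  ultimately show ?thesis unfolding ngg_term_def Pair by (simp add: frac_le)
qed

lemma NGG_ge:
  assumes "F \<subseteq> upper_edges E"
  shows "sum (ngg_term n E) F + real (card (upper_edges E) - card F) / sqrt (real (halves_prod n))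
    \<le> NGG n E"
proof -
  have "1 / sqrt (real (halves_prod n)) \<le> ngg_term n E e" if "e \<in> upper_edges E" for e
    using ngg_term_ge that unfolding upper_edges_def by auto
  from sum_ge_subset_plus_bound[OF finite_upper_edges assms this] show ?thesis
    unfolding NGG_eq_sum_ngg_term by simp
qed

end

section \<open>Degrees and leaves\<close>

definition deg :: "(nat \<times> nat) set \<Rightarrow> nat \<Rightarrow> nat" where
  "deg E v = card (E `` {v})"

context conn_bip_graph
begin

lemma finite_neighbours: "finite (E `` {v})"
  using finite_E by (simp add: finite_Image)

lemma exists_parent_edge:
  assumes "w < n" "w \<noteq> 0"
  shows "\<exists>p. (p, w) \<in> E \<and> gdist E 0 p + 1 = gdist E 0 w"
proof -
  have r: "(0, w) \<in> E\<^sup>*" using reachable assms by simp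
  obtain j where j: "gdist E 0 w = Suc j"
    using gdist_pos[OF r] assms(2) gr0_implies_Suc by blast
  then obtain p where p: "(0, p) \<in> E ^^ j" "(p, w) \<in> E" using relpow_gdist[OF r] by auto
  have "gdist E 0 w \<le> gdist E 0 p + 1"
    using gdist_edge_le[OF reachable p(2)] edge_lt[OF p(2)] assms by auto
  with gdist_le_relpow[OF p(1)] j have "gdist E 0 p + 1 = gdist E 0 w" by simp
  with p show ?thesis by blast
qed

text \<open>Sending each vertex \<open>w \<noteq> 0\<close> to an edge towards a vertex closer to \<open>0\<close> is injective.\<close>

lemma card_upper_edges_ge: "n - 1 \<le> card (upper_edges E)"
proof -
  define par where "par w = (SOME p. (p, w) \<in> E \<and> gdist E 0 p + 1 = gdist E 0 w)" for w
  have par: "(par w, w) \<in> E \<and> gdist E 0 (par w) + 1 = gdist E 0 w" if "w \<in> {1..<n}" for w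
    unfolding par_def using someI_ex[OF exists_parent_edge] that by simp
  have "inj_on (\<lambda>w. sort_pair (par w, w)) {1..<n}"
  proof (rule inj_onI)
    fix w w' assume "w \<in> {1..<n}" "w' \<in> {1..<n}" "sort_pair (par w, w) = sort_pair (par w', w')"
    with par[of w] par[of w'] show "w = w'" by (auto simp: sort_pair_eq_iff)
  qed
  moreover have "(\<lambda>w. sort_pair (par w, w)) ` {1..<n} \<subseteq> upper_edges E"
    using par sort_pair_in_upper_edges by auto
  ultimately have "card {1..<n} \<le> card (upper_edges E)"
    using card_inj_on_le finite_upper_edges by blast
  then show ?thesis by simp
qed

lemma card_E: "card E = 2 * card (upper_edges E)"
proof -
  have "E = upper_edges E \<union> prod.swap ` upper_edges E"
  proof (intro equalityI subrelI)
    fix a b assume ab: "(a, b) \<in> E"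
    show "(a, b) \<in> upper_edges E \<union> prod.swap ` upper_edges E"
    proof (cases "a < b")
      case False
      then have "(b, a) \<in> upper_edges E"
        using ab edge_sym edge_neq[OF ab] unfolding upper_edges_def by auto
      then show ?thesis by (auto intro: rev_image_eqI[of "(b, a)"])
    qed (use ab in \<open>simp add: upper_edges_def\<close>)
  qed (auto simp: upper_edges_def intro: edge_sym)
  moreover have "upper_edges E \<inter> prod.swap ` upper_edges E = {}"
    unfolding upper_edges_def by auto
  moreover have "card (prod.swap ` upper_edges E) = card (upper_edges E)"
    by (simp add: card_image)
  ultimately show ?thesis
    using finite_upper_edges card_Un_disjoint[of "upper_edges E" "prod.swap ` upper_edges E"] by simp
qed

lemma sum_deg_eq_card: "(\<Sum>v\<in>V. deg E v) = card {e \<in> E. fst e \<in> V}" if "V \<subseteq> {..<n}"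
proof -
  have "{e \<in> E. fst e \<in> V} = Sigma V (\<lambda>v. E `` {v})" by auto
  then show ?thesis
    using that finite_subset[of V "{..<n}"] finite_neighbours unfolding deg_def by simp
qed

lemma deg_pos: "v < n \<Longrightarrow> 1 \<le> deg E v"
proof -
  assume v: "v < n"
  define w :: nat where "w = (if v = 0 then 1 else 0)"
  have w: "w < n" "w \<noteq> v" using three_le unfolding w_def by auto
  then obtain y where "(v, y) \<in> E"
    using reachable[OF v w(1)] by (metis converse_rtranclE)
  then have "E `` {v} \<noteq> {}" by auto
  then show ?thesis unfolding deg_def using finite_neighbours
    by (simp add: Suc_le_eq card_gt_0_iff)
qed

definition leaves :: "nat set" where
  "leaves = {v. v < n \<and> deg E v = 1}"

lemma finite_leaves: "finite leaves"
  unfolding leaves_def by simp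

lemma pendant_edge:
  assumes "v \<in> leaves"
  obtains p where "E `` {v} = {p}" "nclose n E v p = 1" "nclose n E p v = n - 1"
proof -
  have "card (E `` {v}) = 1" using assms unfolding leaves_def deg_def by simp
  then obtain p where p: "E `` {v} = {p}" by (rule card_1_singletonE)
  then have e: "(v, p) \<in> E" by auto
  have "nclose n E v p = card {v}"
    by (rule nclose_cut_edge) (use assms edge_neq[OF e] e p in \<open>auto simp: leaves_def\<close>)
  then have "nclose n E v p = 1" by simp
  with that p nclose_add[OF e] show ?thesis by simp
qed

lemma pendant_edges:
  obtains F where "F \<subseteq> upper_edges E" "card F = card leaves"
    "sum (ngg_term n E) F = real (card leaves) / sqrt (real n - 1)"
proof -
  define nb where "nb v = (THE p. E `` {v} = {p})" for v
  have nb: "(v, nb v) \<in> E \<and> nclose n E v (nb v) = 1 \<and> nclose n E (nb v) v = n - 1"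
    if v: "v \<in> leaves" for v
  proof -
    obtain p where "E `` {v} = {p}" "nclose n E v p = 1" "nclose n E p v = n - 1"
      using pendant_edge[OF v] by blast
    moreover from this have "nb v = p" unfolding nb_def by auto
    ultimately show ?thesis by auto
  qed
  define F where "F = (\<lambda>v. sort_pair (v, nb v)) ` leaves"
  have "inj_on (\<lambda>v. sort_pair (v, nb v)) leaves"
  proof (rule inj_onI)
    fix v w assume "v \<in> leaves" "w \<in> leaves" "sort_pair (v, nb v) = sort_pair (w, nb w)"
    with nb[of v] nb[of w] three_le show "v = w" by (auto simp: sort_pair_eq_iff)
  qed
  moreover have "ngg_term n E (v, nb v) = 1 / sqrt (real n - 1)" if "v \<in> leaves" for v
    using nb[OF that] three_le unfolding ngg_term_def by (simp add: of_nat_diff)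
  ultimately have "sum (ngg_term n E) F = real (card leaves) / sqrt (real n - 1)"
    unfolding F_def by (simp add: sum.reindex)
  moreover have "F \<subseteq> upper_edges E" "card F = card leaves"
    unfolding F_def using nb sort_pair_in_upper_edges card_image[OF \<open>inj_on _ leaves\<close>] by auto
  ultimately show ?thesis using that by blast
qed

lemma card_leaves_le: "card leaves \<le> card (upper_edges E)"
  by (rule pendant_edges) (metis card_mono finite_upper_edges)

lemma NGG_ge_leaves:
  assumes "L \<le> card leaves"
  shows "real L / sqrt (real n - 1)
     + real (card (upper_edges E) - L) / sqrt (real (halves_prod n)) \<le> NGG n E"
proof -
  let ?m = "card (upper_edges E)" and ?a = "1 / sqrt (real n - 1)"
    and ?c = "1 / sqrt (real (halves_prod n))"
  have "?c \<le> ?a"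
    using pred_le_halves_prod[of n] three_le by (simp add: frac_le real_sqrt_le_mono)
  then have "real L * ?a + real (?m - L) * ?c \<le> real (card leaves) * ?a + real (?m - card leaves) * ?c"
    using count_weighted_mono assms card_leaves_le by blast
  also have "\<dots> \<le> NGG n E"
    using pendant_edges NGG_ge by (metis times_divide_eq_right mult.right_neutral)
  finally show ?thesis by simp
qed

text \<open>The handshake lemma, with every vertex charged its least possible degree.\<close>

lemma handshake_excess:
  "2 * card (upper_edges E) + card leaves
     = 2 * n + (\<Sum>v<n. deg E v - (if v \<in> leaves then 1 else 2))"
proof -
  let ?f = "\<lambda>v. if v \<in> leaves then 1 else 2 :: nat"
  have sub: "leaves \<subseteq> {..<n}" unfolding leaves_def by auto
  have "{..<n} \<inter> - leaves = {..<n} - leaves" by auto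
  then have "(\<Sum>v<n. ?f v) + card leaves = 2 * n"
    using sub card_mono[OF _ sub] by (simp add: sum.If_cases Int_absorb1 card_Diff_subset finite_leaves)
  moreover have "?f v \<le> deg E v" if "v < n" for v
    using deg_pos[OF that] that by (auto simp: leaves_def)
  then have "(\<Sum>v<n. deg E v) = (\<Sum>v<n. ?f v + (deg E v - ?f v))"
    by (intro sum.cong) auto
  then have "(\<Sum>v<n. deg E v) = (\<Sum>v<n. ?f v) + (\<Sum>v<n. deg E v - ?f v)"
    by (simp add: sum.distrib)
  moreover have "(\<Sum>v<n. deg E v) = 2 * card (upper_edges E)"
  proof -
    have "{e \<in> E. fst e \<in> {..<n}} = E" using edge_lt by auto
    then show ?thesis using sum_deg_eq_card[of "{..<n}"] card_E by simp
  qed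
  ultimately show ?thesis by simp
qed

lemma deg_eq_two_if_tree_with_two_leaves:
  assumes "card (upper_edges E) = n - 1" "card leaves = 2" "v < n" "v \<notin> leaves"
  shows "deg E v = 2"
proof -
  have "(\<Sum>v<n. deg E v - (if v \<in> leaves then 1 else 2)) = 0"
    using handshake_excess assms(1,2) three_le by linarith
  then have "\<forall>v<n. deg E v - (if v \<in> leaves then 1 else 2) = 0" by simp
  then have "deg E v \<le> 2" using assms(3,4) by auto
  with deg_pos[OF assms(3)] assms(3,4) show ?thesis unfolding leaves_def by simp
qed

lemma card_edges_from_colour_class:
  "card {e \<in> E. fst e \<in> S} = card (upper_edges E)"
  "card {e \<in> E. fst e \<notin> S} = card (upper_edges E)"
proof -
  have swap: "(b, a) \<in> E \<and> (b \<in> S \<longleftrightarrow> a \<notin> S)" if "(a, b) \<in> E" for a b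
    using that bipartition edge_sym by fastforce
  have "prod.swap ` {e \<in> E. fst e \<in> S} = {e \<in> E. fst e \<notin> S}"
  proof (intro equalityI subrelI)
    fix a b assume "(a, b) \<in> prod.swap ` {e \<in> E. fst e \<in> S}"
    then have "(b, a) \<in> E" "b \<in> S" by auto
    with swap[of b a] swap[of a b] show "(a, b) \<in> {e \<in> E. fst e \<notin> S}" by auto
  next
    fix a b assume "(a, b) \<in> {e \<in> E. fst e \<notin> S}"
    with swap[of a b] have "(b, a) \<in> {e \<in> E. fst e \<in> S}" by auto
    then show "(a, b) \<in> prod.swap ` {e \<in> E. fst e \<in> S}" by (auto intro: rev_image_eqI[of "(b, a)"])
  qed
  then have eq: "card {e \<in> E. fst e \<in> S} = card {e \<in> E. fst e \<notin> S}"
    using card_image[of prod.swap "{e \<in> E. fst e \<in> S}"] by simp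
  have "card E = card ({e \<in> E. fst e \<in> S} \<union> {e \<in> E. fst e \<notin> S})"
    by (rule arg_cong[where f = card]) auto
  also have "\<dots> = card {e \<in> E. fst e \<in> S} + card {e \<in> E. fst e \<notin> S}"
    by (rule card_Un_disjoint) (use finite_E in auto)
  finally show "card {e \<in> E. fst e \<in> S} = card (upper_edges E)"
    "card {e \<in> E. fst e \<notin> S} = card (upper_edges E)"
    using eq card_E by simp_all
qed

text \<open>If all degrees were at least 2, each colour class would have at most half as many
  vertices as there are edges.\<close>

lemma leaves_nonempty_if_odd:
  assumes "odd n" "card (upper_edges E) \<le> n"
  shows "leaves \<noteq> {}"
proof
  assume "leaves = {}"
  then have deg2: "2 \<le> deg E v" if "v < n" for v
    using deg_pos[OF that] that unfolding leaves_def by fastforce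
  have two_card_le: "2 * card V \<le> card {e \<in> E. fst e \<in> V}" if "V \<subseteq> {..<n}" for V
  proof -
    have "(\<Sum>v\<in>V. 2) \<le> (\<Sum>v\<in>V. deg E v)"
      using deg2 that by (intro sum_mono) auto
    with sum_deg_eq_card[OF that] show ?thesis by (simp add: mult.commute)
  qed
  have "{e \<in> E. fst e \<in> S \<inter> {..<n}} = {e \<in> E. fst e \<in> S}"
    "{e \<in> E. fst e \<in> {..<n} - S} = {e \<in> E. fst e \<notin> S}"
    using edge_lt by auto
  then have "2 * card (S \<inter> {..<n}) \<le> card (upper_edges E)"
    "2 * card ({..<n} - S) \<le> card (upper_edges E)"
    using two_card_le[of "S \<inter> {..<n}"] two_card_le[of "{..<n} - S"] card_edges_from_colour_class
    by auto
  moreover have "card (S \<inter> {..<n}) + card ({..<n} - S) = n"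
  proof -
    have "(S \<inter> {..<n}) \<union> ({..<n} - S) = {..<n}" "(S \<inter> {..<n}) \<inter> ({..<n} - S) = {}" by auto
    then show ?thesis using card_Un_disjoint[of "S \<inter> {..<n}" "{..<n} - S"] by simp
  qed
  ultimately show False using assms by presburger
qed

section \<open>Trees with two leaves\<close>

lemma two_neighbours:
  assumes "deg E p = 2" "(p, l) \<in> E"
  obtains q where "E `` {p} = {l, q}" "q \<noteq> l"
proof -
  obtain x y where xy: "E `` {p} = {x, y}" "x \<noteq> y"
    using assms(1) unfolding deg_def card_2_iff by blast
  have "l \<in> E `` {p}" using assms(2) by auto
  with xy that show ?thesis by (metis insert_commute insertE singletonD)
qed

lemma next_bridge:
  assumes tree: "card (upper_edges E) = n - 1" "card leaves = 2"
    and X: "finite X" "X \<subseteq> {..<n}" "card X + 1 < n" "x \<in> X" "y \<notin> X" "(x, y) \<in> E"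
    and cut: "\<And>a b. (a, b) \<in> E \<Longrightarrow> a \<in> X \<Longrightarrow> b \<notin> X \<Longrightarrow> a = x \<and> b = y"
  obtains z where "E `` {y} = {x, z}" "z \<notin> insert y X" "nclose n E y z = card X + 1"
    "\<And>a b. (a, b) \<in> E \<Longrightarrow> a \<in> insert y X \<Longrightarrow> b \<notin> insert y X \<Longrightarrow> a = y \<and> b = z"
proof -
  have yn: "y < n" using edge_lt X(6) by auto
  have "y \<notin> leaves"
  proof
    assume "y \<in> leaves"
    then have "card (E `` {y}) = 1" unfolding leaves_def deg_def by simp
    then obtain w where w: "E `` {y} = {w}" by (rule card_1_singletonE)
    have "x \<in> E `` {y}" using edge_sym[OF X(6)] by blast
    with w have "E `` {y} = {x}" by simp
    have "card (insert y X) = n"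
    proof (rule closed_set_card)
      fix a b assume ab: "(a, b) \<in> E" "a \<in> insert y X"
      then have "a = y \<Longrightarrow> b \<in> E `` {y}" by blast
      with cut[OF ab(1)] ab(2) \<open>E `` {y} = {x}\<close> X(4) show "b \<in> insert y X" by auto
    qed (use X yn in auto)
    with X show False by simp
  qed
  then obtain z where z: "E `` {y} = {x, z}" "z \<noteq> x"
    using two_neighbours deg_eq_two_if_tree_with_two_leaves[OF tree yn] edge_sym[OF X(6)] by metis
  have yz: "(y, z) \<in> E" using z by auto
  have zX: "z \<notin> insert y X"
    using cut[OF edge_sym[OF yz]] edge_neq[OF yz] z(2) X(5) by auto
  have cut': "a = y \<and> b = z" if "(a, b) \<in> E" "a \<in> insert y X" "b \<notin> insert y X" for a b
  proof (cases "a = y")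
    case True
    with that(1) z(1) have "b \<in> {x, z}" by blast
    with True that(3) X(4) show ?thesis by auto
  next
    case False
    with that cut[of a b] show ?thesis by auto
  qed
  have "nclose n E y z = card (insert y X)"
    by (rule nclose_cut_edge[OF _ _ zX yz cut']) (use X yn in auto)
  with X(1,5) show ?thesis by (intro that[OF z(1) zX _ cut']) simp_all
qed

lemma pendant_path:
  assumes tree: "card (upper_edges E) = n - 1" "card leaves = 2" and "4 \<le> n" and "l \<in> leaves"
  obtains p q r where "(l, p) \<in> E" "nclose n E l p = 1" "nclose n E p l = n - 1"
    "(p, q) \<in> E" "nclose n E p q = 2" "nclose n E q p = n - 2" "E `` {p} = {l, q}"
    "(q, r) \<in> E" "nclose n E q r = 3" "nclose n E r q = n - 3"
proof -
  obtain p where p: "E `` {l} = {p}" "nclose n E l p = 1" "nclose n E p l = n - 1"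
    using pendant_edge[OF assms(4)] by blast
  have lp: "(l, p) \<in> E" "l < n" using p(1) edge_lt by auto
  have cut: "a = l \<and> b = p" if "(a, b) \<in> E" "a \<in> {l}" "b \<notin> {l}" for a b
  proof -
    have "b \<in> E `` {l}" using that by blast
    with p(1) that(2) show ?thesis by simp
  qed
  have "finite {l}" "{l} \<subseteq> {..<n}" "card {l} + 1 < n" "l \<in> {l}" "p \<notin> {l}"
    using lp edge_neq[OF lp(1)] assms(3) by simp_all
  from next_bridge[OF tree this lp(1) cut]
  obtain q where q: "E `` {p} = {l, q}" "q \<notin> {p, l}" "nclose n E p q = card {l} + 1"
    and cut': "\<And>a b. (a, b) \<in> E \<Longrightarrow> a \<in> {p, l} \<Longrightarrow> b \<notin> {p, l} \<Longrightarrow> a = p \<and> b = q" by blast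
  have pq: "(p, q) \<in> E" using q(1) by auto
  have "finite {p, l}" "{p, l} \<subseteq> {..<n}" "card {p, l} + 1 < n" "p \<in> {p, l}" "q \<notin> {p, l}"
    using edge_lt[OF lp(1)] edge_neq[OF lp(1)] q(2) assms(3) by simp_all
  from next_bridge[OF tree this pq cut']
  obtain r where r: "E `` {q} = {p, r}" "r \<notin> {q, p, l}" "nclose n E q r = card {p, l} + 1"
    "\<And>a b. (a, b) \<in> E \<Longrightarrow> a \<in> {q, p, l} \<Longrightarrow> b \<notin> {q, p, l} \<Longrightarrow> a = q \<and> b = r" by blast
  have qr: "(q, r) \<in> E" using r(1) by auto
  have "nclose n E q r = 3" "nclose n E p q = 2"
    using r(3) q(3) edge_neq[OF lp(1)] by simp_all
  with that lp(1) p q(1) pq qr nclose_add[OF pq] nclose_add[OF qr] show ?thesis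
    by (metis add_diff_cancel_left')
qed

lemma NGG_ge_two_pendant_paths:
  assumes tree: "card (upper_edges E) = n - 1" "card leaves = 2" and "9 \<le> n"
  shows "2 / sqrt (real n - 1) + 2 / sqrt (2 * (real n - 2)) + 1 / sqrt (3 * (real n - 3))
    + real (n - 6) / sqrt (real (halves_prod n)) \<le> NGG n E"
proof -
  obtain l1 l2 where l: "leaves = {l1, l2}" "l1 \<noteq> l2" using tree(2) by (meson card_2_iff)
  obtain p1 q1 r1 where c1: "(l1, p1) \<in> E" "nclose n E l1 p1 = 1" "nclose n E p1 l1 = n - 1"
    "(p1, q1) \<in> E" "nclose n E p1 q1 = 2" "nclose n E q1 p1 = n - 2" "E `` {p1} = {l1, q1}"
    "(q1, r1) \<in> E" "nclose n E q1 r1 = 3" "nclose n E r1 q1 = n - 3"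
    by (rule pendant_path[OF tree, of l1]) (use l assms(3) in auto)
  obtain p2 q2 r2 where c2: "(l2, p2) \<in> E" "nclose n E l2 p2 = 1" "nclose n E p2 l2 = n - 1"
    "(p2, q2) \<in> E" "nclose n E p2 q2 = 2" "nclose n E q2 p2 = n - 2"
    by (rule pendant_path[OF tree, of l2]) (use l assms(3) in auto)
  have "p1 \<noteq> p2"
  proof
    assume "p1 = p2"
    then have "l2 = q1" using edge_sym[OF c2(1)] c1(7) l(2) by auto
    with \<open>p1 = p2\<close> c1(5) c2(3) assms(3) show False by simp
  qed
  define es where "es = [(l1, p1), (l2, p2), (p1, q1), (p2, q2), (q1, r1)]"
  have "distinct (map sort_pair es)"
    \<comment> \<open>an equality of two of these vertices would equate two different values of \<open>nclose\<close>\<close>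
    using c1 c2 l(2) \<open>p1 \<noteq> p2\<close> assms(3) unfolding es_def by (auto simp: sort_pair_eq_iff)
  moreover have "set es \<subseteq> E" unfolding es_def using c1 c2 by simp
  ultimately have F: "set (map sort_pair es) \<subseteq> upper_edges E" "card (set (map sort_pair es)) = 5"
    using sort_pair_in_upper_edges distinct_card by (fastforce simp: es_def)+
  have "sum (ngg_term n E) (set (map sort_pair es)) = sum_list (map (ngg_term n E) es)"
    using sum_list_distinct_conv_sum_set[OF \<open>distinct (map sort_pair es)\<close>, of "ngg_term n E"]
    by (simp add: comp_def)
  also have "\<dots> = 2 / sqrt (real n - 1) + 2 / sqrt (2 * (real n - 2)) + 1 / sqrt (3 * (real n - 3))"
    unfolding es_def ngg_term_def using c1 c2 assms(3) by (simp add: mult.commute of_nat_diff)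
  finally show ?thesis using NGG_ge[OF F(1)] F(2) tree(1) by simp
qed

end

section \<open>The lower bound\<close>

lemma div_sqrt_le_div_sqrt_iff:
  fixes x y c d :: real
  assumes "0 < x" "0 < y" "0 < c" "0 < d"
  shows "c / sqrt x \<le> d / sqrt y \<longleftrightarrow> c\<^sup>2 * y \<le> d\<^sup>2 * x"
proof -
  have "c / sqrt x \<le> d / sqrt y \<longleftrightarrow> c * sqrt y \<le> d * sqrt x"
    using assms by (simp add: divide_simps mult.commute)
  also have "\<dots> \<longleftrightarrow> sqrt (c\<^sup>2 * y) \<le> sqrt (d\<^sup>2 * x)"
    using assms by (simp add: real_sqrt_mult)
  also have "\<dots> \<longleftrightarrow> c\<^sup>2 * y \<le> d\<^sup>2 * x" by simp
  finally show ?thesis .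
qed

lemma one_div_le_one_div_sqrt: "0 < r \<Longrightarrow> 0 < x \<Longrightarrow> x \<le> r\<^sup>2 \<Longrightarrow> 1 / r \<le> 1 / sqrt x"
  by (intro divide_left_mono real_le_lsqrt) auto

lemma one_div_sqrt_le_one_div: "0 < r \<Longrightarrow> r\<^sup>2 \<le> x \<Longrightarrow> 1 / sqrt x \<le> 1 / r"
  using real_le_rsqrt[of r x] by (simp add: frac_le)

lemma min_NGG_bip_eq:
  "min_NGG_bip n = (if even n then 2
     else if n \<le> 15 then 1 / sqrt (real n - 1) + (real n - 1) / sqrt (real (halves_prod n))
     else (real n + 1) / sqrt (real (halves_prod n)))"
  unfolding min_NGG_bip_def halves_prod_def Let_def by (auto simp: algebra_simps)

text \<open>For odd \<open>n \<le> 13\<close>, two pendant paths of length three outweigh a pendant edge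
  (numerically, with \<open>halves_prod n\<close> = 20, 30, 42).\<close>

lemma pendant_paths_estimate:
  assumes "n \<in> {9, 11, 13}"
  shows "5 / sqrt (real (halves_prod n))
    \<le> 1 / sqrt (real n - 1) + 2 / sqrt (2 * (real n - 2)) + 1 / sqrt (3 * (real n - 3))"
proof -
  note lo = one_div_le_one_div_sqrt and hi = one_div_sqrt_le_one_div
  from assms consider "n = 9" | "n = 11" | "n = 13" by auto
  then show ?thesis
  proof cases
    case 1
    with lo[of "28285/10000" 8] lo[of "37417/10000" 14] lo[of "42427/10000" 18]
      hi[of "44721/10000" 20] show ?thesis
      by (simp add: halves_prod_def power2_eq_square)
  next
    case 2
    with lo[of "3163/1000" 10] lo[of "4243/1000" 18] lo[of "4899/1000" 24]
      hi[of "5477/1000" 30] show ?thesis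
      by (simp add: halves_prod_def power2_eq_square)
  next
    case 3
    with lo[of "3465/1000" 12] lo[of "4691/1000" 22] lo[of "5478/1000" 30]
      hi[of "6480/1000" 42] show ?thesis
      by (simp add: halves_prod_def power2_eq_square)
  qed
qed

text \<open>The comparison of \<open>2 / N\<close> with \<open>1 / sqrt (n - 1)\<close> switches at \<open>n = 15\<close>, whence the
  two regimes of the minimum for odd \<open>n\<close>.\<close>

lemma odd_weights_compare:
  assumes "n = 2 * k + 1"
  shows "k \<le> 7 \<Longrightarrow> 1 / sqrt (real n - 1) \<le> 2 / sqrt (real (halves_prod n))"
    and "7 \<le> k \<Longrightarrow> 2 / sqrt (real (halves_prod n)) \<le> 1 / sqrt (real n - 1)"
proof -
  have N: "real (halves_prod n) = real k * (real k + 1)" and n1: "real n - 1 = 2 * real k"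
    using assms by (simp_all add: halves_prod_def algebra_simps)
  show "1 / sqrt (real n - 1) \<le> 2 / sqrt (real (halves_prod n))" if "k \<le> 7"
  proof (cases "k = 0")
    case False
    then have "0 < real k * (real k + 1)" by simp
    with div_sqrt_le_div_sqrt_iff[of "real n - 1" "real (halves_prod n)" 1 2] that N n1 False
    show ?thesis by (auto simp: algebra_simps power2_eq_square mult_right_mono)
  qed (use assms in simp)
  show "2 / sqrt (real (halves_prod n)) \<le> 1 / sqrt (real n - 1)" if "7 \<le> k"
  proof -
    have "0 < real k * (real k + 1)" using that by simp
    with div_sqrt_le_div_sqrt_iff[of "real (halves_prod n)" "real n - 1" 2 1] that N n1
    show ?thesis by (auto simp: algebra_simps power2_eq_square mult_right_mono)
  qed
qed

context conn_bip_graph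
begin

lemma NGG_ge_even:
  assumes "even n" "8 \<le> n"
  shows "2 \<le> NGG n E"
proof -
  obtain k where k: "n = 2 * k" using assms(1) by blast
  have k4: "4 \<le> k" and N: "sqrt (real (halves_prod n)) = real k"
    using assms(2) k by (simp_all add: halves_prod_def)
  let ?m = "card (upper_edges E)"
  show ?thesis
  proof (cases "n \<le> ?m")
    case True
    have "real ?m / real k \<le> NGG n E" using NGG_ge_leaves[of 0] N by simp
    moreover have "2 \<le> real ?m / real k" using True k k4 by (simp add: field_simps)
    ultimately show ?thesis by linarith
  next
    case False
    then have m: "?m = n - 1" using card_upper_edges_ge by simp
    then have "2 \<le> card leaves" using handshake_excess k4 k by simp
    then have "2 / sqrt (real n - 1) + real (n - 3) / real k \<le> NGG n E"
      using NGG_ge_leaves[of 2] N m by (simp add: numeral_3_eq_3)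
    moreover have "3 / real k \<le> 2 / sqrt (real n - 1)"
    proof -
      have "0 \<le> (real k - 4) * (4 * real k - 2)" using k4 by simp
      then have "3\<^sup>2 * (real n - 1) \<le> 2\<^sup>2 * (real k * real k)"
        using k by (simp add: algebra_simps power2_eq_square)
      then show ?thesis
        using div_sqrt_le_div_sqrt_iff[of "real k * real k" "real n - 1" 3 2] k k4 by simp
    qed
    moreover have "real (n - 3) / real k + 3 / real k = 2" using k k4 by (simp add: field_simps of_nat_diff)
    ultimately show ?thesis by linarith
  qed
qed

lemma NGG_ge_odd_small_tree:
  assumes "n \<in> {9, 11, 13}" "card (upper_edges E) = n - 1"
  shows "1 / sqrt (real n - 1) + (real n - 1) / sqrt (real (halves_prod n)) \<le> NGG n E"
proof -
  have L: "2 \<le> card leaves" using handshake_excess assms by auto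
  show ?thesis
  proof (cases "card leaves = 2")
    case True
    then show ?thesis
      using NGG_ge_two_pendant_paths[OF assms(2) True] pendant_paths_estimate[OF assms(1)] assms(1)
      by (auto simp: of_nat_diff add_divide_distrib[symmetric])
  next
    case False
    then have "3 / sqrt (real n - 1) + real (n - 4) / sqrt (real (halves_prod n)) \<le> NGG n E"
      using NGG_ge_leaves[of 3] L assms(2) by simp
    moreover have "3 / sqrt (real (halves_prod n)) \<le> 2 / sqrt (real n - 1)"
      using div_sqrt_le_div_sqrt_iff[of "real (halves_prod n)" "real n - 1" 3 2] assms(1)
      by (auto simp: halves_prod_def)
    ultimately show ?thesis using assms(1) by (auto simp: of_nat_diff add_divide_distrib[symmetric])
  qed
qed

lemma NGG_ge_odd_tree:
  assumes "odd n" "9 \<le> n" "card (upper_edges E) = n - 1"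
  shows "min_NGG_bip n \<le> NGG n E"
proof (cases "n \<le> 13")
  case True
  with assms(1,2) have "n = 9 \<or> n = 11 \<or> n = 13" by presburger
  then have "n \<in> {9, 11, 13}" by simp
  then show ?thesis using NGG_ge_odd_small_tree assms(3) min_NGG_bip_eq[of n] by auto
next
  case False
  obtain k where k: "n = 2 * k + 1" using assms(1) oddE by blast
  define a c where "a = 1 / sqrt (real n - 1)" and "c = 1 / sqrt (real (halves_prod n))"
  have "2 \<le> card leaves" using handshake_excess assms(2,3) by linarith
  then have "2 * a + (real n - 3) * c \<le> NGG n E"
    using NGG_ge_leaves[of 2] assms unfolding a_def c_def by (simp add: of_nat_diff)
  moreover have "2 * c \<le> a" using odd_weights_compare(2)[OF k] False k unfolding a_def c_def by simp
  moreover have "min_NGG_bip n = a + (real n - 1) * c \<or> min_NGG_bip n = (real n + 1) * c"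
    using min_NGG_bip_eq[of n] assms(1) unfolding a_def c_def by auto
  ultimately show ?thesis by (auto simp: algebra_simps)
qed

lemma NGG_ge_odd:
  assumes "odd n" "9 \<le> n"
  shows "min_NGG_bip n \<le> NGG n E"
proof -
  obtain k where k: "n = 2 * k + 1" using assms(1) oddE by blast
  let ?m = "card (upper_edges E)"
  define a c where "a = 1 / sqrt (real n - 1)" and "c = 1 / sqrt (real (halves_prod n))"
  have weighted: "real L * a + real (?m - L) * c \<le> NGG n E" if "L \<le> card leaves" for L
    using NGG_ge_leaves[OF that] unfolding a_def c_def by simp
  have target: "min_NGG_bip n = (if n \<le> 15 then a + (real n - 1) * c else (real n + 1) * c)"
    using min_NGG_bip_eq[of n] assms(1) unfolding a_def c_def by auto
  consider "n + 1 \<le> ?m" | "?m = n" | "?m = n - 1"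
    using card_upper_edges_ge by linarith
  then show ?thesis
  proof cases
    case 1
    have "real ?m * c \<le> NGG n E" using weighted[of 0] by simp
    moreover have "(real n + 1) * c \<le> real ?m * c"
      using 1 by (intro mult_right_mono) (auto simp: c_def)
    moreover have "a \<le> 2 * c" if "n \<le> 15"
      using odd_weights_compare(1)[OF k] that k unfolding a_def c_def by simp
    ultimately show ?thesis using target by (auto simp: algebra_simps)
  next
    case 2
    then have "1 \<le> card leaves"
      using leaves_nonempty_if_odd assms(1) finite_leaves by (simp add: Suc_le_eq card_gt_0_iff)
    then have "a + (real n - 1) * c \<le> NGG n E" using weighted[of 1] 2 assms(2) by (simp add: of_nat_diff)
    moreover have "2 * c \<le> a" if "15 \<le> n"
      using odd_weights_compare(2)[OF k] that k unfolding a_def c_def by simp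
    ultimately show ?thesis using target by (auto simp: algebra_simps)
  next
    case 3
    with NGG_ge_odd_tree assms show ?thesis by simp
  qed
qed

lemma min_NGG_bip_le_NGG:
  assumes "8 \<le> n"
  shows "min_NGG_bip n \<le> NGG n E"
proof (cases "even n")
  case True
  then show ?thesis using NGG_ge_even[OF True assms] min_NGG_bip_eq by simp
next
  case False
  with assms have "9 \<le> n" by presburger
  with False show ?thesis using NGG_ge_odd by simp
qed

lemma GG_eq_sqrt_mult_NGG: "GG n E = sqrt (real n - 2) * NGG n E"
proof -
  have "sqrt ((real (nclose n E u v) + real (nclose n E v u) - 2)
        / (real (nclose n E u v) * real (nclose n E v u)))
      = sqrt (real n - 2) * (1 / sqrt (real (nclose n E u v) * real (nclose n E v u)))"
    if "(u, v) \<in> E" for u v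
    using nclose_add[OF that] by (simp add: real_sqrt_divide flip: of_nat_add)
  then show ?thesis
    unfolding GG_def NGG_def sum_distrib_left by (intro sum.cong) auto
qed

end

section \<open>The extremal graphs\<close>

definition cycle_graph :: "nat \<Rightarrow> (nat \<times> nat) set" where
  "cycle_graph m = {(a, b). a < m \<and> b < m \<and>
     ((int b - int a) mod int m = 1 \<or> (int a - int b) mod int m = 1)}"

lemma mod_diff_eq_one_iff:
  assumes "a < m" "b < m" "3 \<le> m"
  shows "(int b - int a) mod int m = 1 \<longleftrightarrow> b = a + 1 \<or> (a = m - 1 \<and> b = 0)"
proof (cases "a \<le> b")
  case True
  then have "(int b - int a) mod int m = int b - int a"
    using assms by (intro mod_pos_pos_trivial) auto
  then show ?thesis using True assms by auto
next
  case False
  have "(int b - int a) mod int m = (int b - int a + int m) mod int m" by simp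
  also have "\<dots> = int b - int a + int m"
    using assms False by (intro mod_pos_pos_trivial) auto
  finally show ?thesis using False assms by auto
qed

lemma cycle_graph_iff:
  assumes "3 \<le> m"
  shows "(a, b) \<in> cycle_graph m \<longleftrightarrow> a < m \<and> b < m \<and>
     (b = a + 1 \<or> a = b + 1 \<or> (a = m - 1 \<and> b = 0) \<or> (b = m - 1 \<and> a = 0))"
  unfolding cycle_graph_def using mod_diff_eq_one_iff[of a m b] mod_diff_eq_one_iff[of b m a] assms
  by auto

lemma cycle_graph_subset: "cycle_graph m \<subseteq> {..<m} \<times> {..<m}"
  unfolding cycle_graph_def by auto

lemma graph_on_cycle_graph: "3 \<le> m \<Longrightarrow> graph_on m (cycle_graph m)"
  unfolding graph_on_def sym_def irrefl_def using cycle_graph_iff by auto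

lemma connected_cycle_graph:
  assumes "3 \<le> m"
  shows "connected_graph m (cycle_graph m)"
proof -
  have from0: "(0, i) \<in> (cycle_graph m)\<^sup>*" if "i < m" for i
    using that
  proof (induction i)
    case (Suc i)
    then have "(i, Suc i) \<in> cycle_graph m" using cycle_graph_iff[OF assms] by simp
    with Suc show ?case by (meson Suc_lessD rtrancl_into_rtrancl)
  qed simp
  have "sym (cycle_graph m)" using graph_on_cycle_graph[OF assms] unfolding graph_on_def by auto
  then have "(i, 0) \<in> (cycle_graph m)\<^sup>*" if "i < m" for i
    using from0[OF that] by (metis rtrancl_converseD sym_conv_converse_eq)
  with from0 show ?thesis unfolding connected_graph_def by (meson rtrancl_trans)
qed

lemma conn_bip_graph_cycle_graph:
  assumes "3 \<le> m" "even m"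
  shows "conn_bip_graph m (cycle_graph m) {i. even i}"
  unfolding conn_bip_graph_def
  using graph_on_cycle_graph connected_cycle_graph cycle_graph_iff[OF assms(1)] assms by auto

lemma card_upper_edges_cycle_graph:
  assumes "3 \<le> m"
  shows "card (upper_edges (cycle_graph m)) = m"
proof -
  define f where "f i = (if i + 1 < m then (i, i + 1) else (0, m - 1))" for i
  have "bij_betw f {..<m} (upper_edges (cycle_graph m))"
  proof (rule bij_betw_imageI)
    show "inj_on f {..<m}" unfolding f_def inj_on_def using assms by auto
    show "f ` {..<m} = upper_edges (cycle_graph m)"
    proof (intro equalityI subsetI)
      fix e assume "e \<in> f ` {..<m}"
      then show "e \<in> upper_edges (cycle_graph m)"
        unfolding f_def upper_edges_def using cycle_graph_iff[OF assms] assms by auto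
    next
      fix e assume "e \<in> upper_edges (cycle_graph m)"
      then obtain a b where ab: "e = (a, b)" "a < b" "b < m" "b = a + 1 \<or> (b = m - 1 \<and> a = 0)"
        unfolding upper_edges_def using cycle_graph_iff[OF assms] by auto
      then have "e = f (if b = a + 1 then a else m - 1)" unfolding f_def using assms by auto
      moreover have "(if b = a + 1 then a else m - 1) \<in> {..<m}" using ab by auto
      ultimately show "e \<in> f ` {..<m}" by blast
    qed
  qed
  then show ?thesis using bij_betw_same_card by fastforce
qed

lemma cycle_graph_reflection:
  assumes "3 \<le> m" and ab: "(a, b) \<in> cycle_graph m"
    and \<sigma>: "\<sigma> = (\<lambda>x. nat ((int a + int b - int x) mod int m))"
  shows "\<And>x. x < m \<Longrightarrow> \<sigma> x < m \<and> \<sigma> (\<sigma> x) = x"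
    and "\<And>x y. (x, y) \<in> cycle_graph m \<Longrightarrow> (\<sigma> x, \<sigma> y) \<in> cycle_graph m"
    and "\<sigma> a = b" and "\<sigma> b = a"
proof -
  have m: "0 < int m" using assms(1) by simp
  have int_\<sigma>: "int (\<sigma> x) = (int a + int b - int x) mod int m" for x
    unfolding \<sigma> using m by simp
  have lt: "\<sigma> x < m" for x
    using int_\<sigma>[of x] pos_mod_bound[OF m, of "int a + int b - int x"] by linarith
  have ab': "a < m" "b < m" using ab unfolding cycle_graph_def by auto
  show "\<sigma> x < m \<and> \<sigma> (\<sigma> x) = x" if "x < m" for x
  proof -
    have "int (\<sigma> (\<sigma> x)) = (int a + int b - (int a + int b - int x)) mod int m"
      using int_\<sigma> by (simp add: mod_diff_right_eq)
    then show ?thesis using lt that by simp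
  qed
  show "\<sigma> a = b" "\<sigma> b = a" using int_\<sigma>[of a] int_\<sigma>[of b] ab' by (simp_all add: nat_eq_iff)
  fix x y assume xy: "(x, y) \<in> cycle_graph m"
  have "(int (\<sigma> v) - int (\<sigma> u)) mod int m = (int u - int v) mod int m" for u v
  proof -
    have "(int (\<sigma> v) - int (\<sigma> u)) mod int m
        = ((int a + int b - int v) mod int m - (int a + int b - int u) mod int m) mod int m"
      using int_\<sigma> by simp
    also have "\<dots> = ((int a + int b - int v) - (int a + int b - int u)) mod int m"
      by (simp add: mod_diff_eq)
    finally show ?thesis by simp
  qed
  then show "(\<sigma> x, \<sigma> y) \<in> cycle_graph m" using xy lt unfolding cycle_graph_def by auto
qed

lemma nclose_cycle_graph:
  assumes "3 \<le> m" "m = 2 * k" and ab: "(a, b) \<in> cycle_graph m"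
  shows "nclose m (cycle_graph m) a b = k"
proof -
  interpret conn_bip_graph m "cycle_graph m" "{i. even i}"
    using conn_bip_graph_cycle_graph assms by simp
  define \<sigma> where "\<sigma> = (\<lambda>x. nat ((int a + int b - int x) mod int m))"
  note refl = cycle_graph_reflection[OF assms(1) ab \<sigma>_def]
  have "nclose m (cycle_graph m) (\<sigma> a) (\<sigma> b) = nclose m (cycle_graph m) a b"
    using nclose_involution[OF refl(1,2)] edge_lt[OF ab] by blast
  with refl(3,4) nclose_add[OF ab] assms(2) show ?thesis by simp
qed

lemma NGG_cycle_graph:
  assumes "n = 2 * k" "2 \<le> k"
  shows "NGG n (cycle_graph n) = 2"
proof -
  have n3: "3 \<le> n" using assms by simp
  have "ngg_term n (cycle_graph n) e = 1 / real k" if "e \<in> upper_edges (cycle_graph n)" for e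
  proof (cases e)
    case (Pair a b)
    with that have "(a, b) \<in> cycle_graph n" "(b, a) \<in> cycle_graph n"
      using cycle_graph_iff[OF n3] unfolding upper_edges_def by auto
    then show ?thesis
      using nclose_cycle_graph[OF n3 assms(1)] unfolding ngg_term_def Pair by simp
  qed
  then have "NGG n (cycle_graph n) = real n / real k"
    using card_upper_edges_cycle_graph[OF n3] by (simp add: NGG_eq_sum_ngg_term)
  with assms show ?thesis by simp
qed

lemma gdist_retract_cycle_graph:
  assumes "3 \<le> m" and sub: "cycle_graph m \<subseteq> G"
    and hom: "\<And>x y. (x, y) \<in> G \<Longrightarrow> (\<pi> x, \<pi> y) \<in> cycle_graph m"
    and retract: "\<And>x. x < m \<Longrightarrow> \<pi> x = x"
    and "a < m" "b < m"
  shows "gdist G a b = gdist (cycle_graph m) a b"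
proof (rule antisym)
  have reach: "(a, b) \<in> (cycle_graph m)\<^sup>*"
    using connected_cycle_graph[OF assms(1)] assms(5,6) unfolding connected_graph_def by auto
  show "gdist G a b \<le> gdist (cycle_graph m) a b"
    using gdist_image_le[where f = id, OF _ reach] sub by auto
  have "(a, b) \<in> G\<^sup>*" using reach sub rtrancl_mono by blast
  from gdist_image_le[where f = \<pi>, OF hom this]
  show "gdist (cycle_graph m) a b \<le> gdist G a b" using retract assms(5,6) by simp
qed

text \<open>Each side of a cycle edge keeps its \<open>k\<close> vertices of the cycle, and the extra vertex
  joins one of the sides.\<close>

lemma nclose_mult_cycle_edge:
  assumes G: "conn_bip_graph (m + 1) G S" and "4 \<le> m" "m = 2 * k"
    and sub: "cycle_graph m \<subseteq> G"
    and hom: "\<And>x y. (x, y) \<in> G \<Longrightarrow> (\<pi> x, \<pi> y) \<in> cycle_graph m"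
    and retract: "\<And>x. x < m \<Longrightarrow> \<pi> x = x"
    and ab: "(a, b) \<in> cycle_graph m"
  shows "nclose (m + 1) G a b * nclose (m + 1) G b a = k * (k + 1)"
proof -
  have m3: "3 \<le> m" using assms(2) by simp
  have side: "k \<le> nclose (m + 1) G u v" if uv: "(u, v) \<in> cycle_graph m" for u v
  proof -
    have uv': "u < m" "v < m" using uv unfolding cycle_graph_def by auto
    have "{w \<in> {..<m}. gdist (cycle_graph m) w u < gdist (cycle_graph m) w v}
        \<subseteq> {w \<in> {..<m + 1}. gdist G w u < gdist G w v}"
    proof
      fix w assume "w \<in> {w \<in> {..<m}. gdist (cycle_graph m) w u < gdist (cycle_graph m) w v}"
      with gdist_retract_cycle_graph[OF m3 sub hom retract, of w] uv' show "w \<in> {w \<in> {..<m + 1}. gdist G w u < gdist G w v}"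
        by simp
    qed
    then have "card {w \<in> {..<m}. gdist (cycle_graph m) w u < gdist (cycle_graph m) w v}
        \<le> nclose (m + 1) G u v"
      unfolding nclose_def by (intro card_mono) auto
    then show ?thesis using nclose_cycle_graph[OF m3 assms(3) uv] unfolding nclose_def by simp
  qed
  have "(b, a) \<in> cycle_graph m" using ab cycle_graph_iff[OF m3] by auto
  then have "k \<le> nclose (m + 1) G a b" "k \<le> nclose (m + 1) G b a" using side ab by auto
  moreover have "nclose (m + 1) G a b + nclose (m + 1) G b a = m + 1"
    using conn_bip_graph.nclose_add[OF G] sub ab by auto
  ultimately have "nclose (m + 1) G a b = k \<and> nclose (m + 1) G b a = k + 1 \<or>
        nclose (m + 1) G a b = k + 1 \<and> nclose (m + 1) G b a = k"
    using assms(3) by linarith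
  then show ?thesis by auto
qed

definition cycle_plus_pendant :: "nat \<Rightarrow> (nat \<times> nat) set" where
  "cycle_plus_pendant m = cycle_graph m \<union> {(0, m), (m, 0)}"

text \<open>The new vertex \<open>m\<close> is a twin of vertex \<open>1\<close>: both are adjacent to \<open>0\<close> and \<open>2\<close>.\<close>

definition cycle_plus_twin :: "nat \<Rightarrow> (nat \<times> nat) set" where
  "cycle_plus_twin m = cycle_graph m \<union> {(0, m), (m, 0), (2, m), (m, 2)}"

lemma conn_bip_graph_cycle_extension:
  assumes m: "4 \<le> m" "even m" and G: "G = cycle_graph m \<union> X"
    and X: "X \<subseteq> {(0, m), (m, 0), (2, m), (m, 2)}" "sym X" "(0, m) \<in> X"
  shows "conn_bip_graph (m + 1) G {i. i < m \<and> even i}"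
proof -
  have m3: "3 \<le> m" using m by simp
  have "graph_on (m + 1) G"
    using graph_on_cycle_graph[OF m3] cycle_graph_subset[of m] X m
    unfolding graph_on_def G by (auto simp: sym_Un irrefl_def)
  moreover have "connected_graph (m + 1) G"
    unfolding connected_graph_def
  proof (intro allI impI)
    have to0: "(u, 0) \<in> G\<^sup>* \<and> (0, u) \<in> G\<^sup>*" if "u < m + 1" for u
    proof (cases "u = m")
      case True
      moreover have "(m, 0) \<in> X" using X(2,3) by (meson symD)
      ultimately show ?thesis using X(3) unfolding G by auto
    next
      case False
      then have "(u, 0) \<in> (cycle_graph m)\<^sup>* \<and> (0, u) \<in> (cycle_graph m)\<^sup>*"
        using connected_cycle_graph[OF m3] that m3 unfolding connected_graph_def by auto
      then show ?thesis unfolding G by (meson rtrancl_mono sup_ge1 subsetD)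
    qed
    fix u v assume "u < m + 1" "v < m + 1"
    with to0[of u] to0[of v] show "(u, v) \<in> G\<^sup>*" by (meson rtrancl_trans)
  qed
  moreover have "\<forall>(u, v)\<in>G. (u \<in> {i. i < m \<and> even i}) \<noteq> (v \<in> {i. i < m \<and> even i})"
    using cycle_graph_iff[OF m3] X(1) m unfolding G by auto
  ultimately show ?thesis unfolding conn_bip_graph_def using m by auto
qed

lemma retract_cycle_extension:
  assumes "4 \<le> m" "X \<subseteq> {(0, m), (m, 0), (2, m), (m, 2)}" "(x, y) \<in> cycle_graph m \<union> X"
  shows "((if x = m then 1 else x), (if y = m then 1 else y)) \<in> cycle_graph m"
proof -
  have "(x, y) \<in> cycle_graph m \<Longrightarrow> x < m \<and> y < m" unfolding cycle_graph_def by auto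
  then show ?thesis using assms cycle_graph_iff[of m] by auto
qed

lemma ngg_term_cycle_edge:
  assumes "4 \<le> m" "m = 2 * k" and G: "G = cycle_graph m \<union> X"
    and X: "X \<subseteq> {(0, m), (m, 0), (2, m), (m, 2)}" "sym X" "(0, m) \<in> X"
    and ab: "(a, b) \<in> cycle_graph m"
  shows "ngg_term (m + 1) G (a, b) = 1 / sqrt (real (k * (k + 1)))"
proof -
  have "nclose (m + 1) G a b * nclose (m + 1) G b a = k * (k + 1)"
  proof (rule nclose_mult_cycle_edge[where \<pi> = "\<lambda>x. if x = m then 1 else x"])
    show "conn_bip_graph (m + 1) G {i. i < m \<and> even i}"
      using conn_bip_graph_cycle_extension[OF _ _ G X] assms(1,2) by simp
  qed (use retract_cycle_extension[OF assms(1) X(1)] assms(1,2) ab G in auto)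
  then show ?thesis unfolding ngg_term_def by (metis fst_conv snd_conv of_nat_mult)
qed

lemma upper_edges_Un: "upper_edges (A \<union> B) = upper_edges A \<union> upper_edges B"
  unfolding upper_edges_def by auto

lemma finite_upper_edges_cycle_graph: "finite (upper_edges (cycle_graph m))"
  using cycle_graph_subset[of m] unfolding upper_edges_def
  by (auto intro: finite_subset[of _ "{..<m} \<times> {..<m}"])

lemma sum_ngg_term_cycle_edges:
  assumes "4 \<le> m" "m = 2 * k" and G: "G = cycle_graph m \<union> X"
    and X: "X \<subseteq> {(0, m), (m, 0), (2, m), (m, 2)}" "sym X" "(0, m) \<in> X"
  shows "sum (ngg_term (m + 1) G) (upper_edges (cycle_graph m)) = real m / sqrt (real (k * (k + 1)))"
proof -
  have "sum (ngg_term (m + 1) G) (upper_edges (cycle_graph m))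
      = (\<Sum>e\<in>upper_edges (cycle_graph m). 1 / sqrt (real (k * (k + 1))))"
    by (rule sum.cong) (use ngg_term_cycle_edge[OF assms] in \<open>auto simp: upper_edges_def\<close>)
  then show ?thesis using card_upper_edges_cycle_graph[of m] assms(1) by simp
qed

lemma NGG_cycle_plus_pendant:
  assumes "4 \<le> m" "m = 2 * k" "n = m + 1"
  shows "NGG n (cycle_plus_pendant m)
    = 1 / sqrt (real n - 1) + (real n - 1) / sqrt (real (halves_prod n))"
proof -
  let ?G = "cycle_plus_pendant m"
  have G: "?G = cycle_graph m \<union> {(0, m), (m, 0)}" unfolding cycle_plus_pendant_def ..
  have X: "{(0, m), (m, 0)} \<subseteq> {(0, m), (m, 0), (2, m), (m, 2)}" "sym {(0, m), (m, 0)}"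
    "(0, m) \<in> {(0, m), (m, 0)}" by (auto simp: sym_def)
  interpret conn_bip_graph n ?G "{i. i < m \<and> even i}"
    using conn_bip_graph_cycle_extension[OF _ _ G X] assms by simp
  have nb: "?G `` {m} = {0}" unfolding cycle_plus_pendant_def cycle_graph_def by auto
  then have "m \<in> leaves" unfolding leaves_def deg_def using assms by simp
  then obtain p where "?G `` {m} = {p}" "nclose n ?G m p = 1" "nclose n ?G p m = n - 1"
    by (rule pendant_edge)
  with nb have "ngg_term n ?G (0, m) = 1 / sqrt (real n - 1)"
    unfolding ngg_term_def using assms by (simp add: of_nat_diff)
  moreover have "upper_edges ?G = upper_edges (cycle_graph m) \<union> {(0, m)}"
    "(0, m) \<notin> upper_edges (cycle_graph m)"
    unfolding G upper_edges_Un using cycle_graph_subset[of m] assms(1) by (auto simp: upper_edges_def)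
  ultimately show ?thesis
    using sum_ngg_term_cycle_edges[OF _ _ G X] finite_upper_edges_cycle_graph assms
    by (simp add: NGG_eq_sum_ngg_term halves_prod_def)
qed

lemma NGG_cycle_plus_twin:
  assumes "4 \<le> m" "m = 2 * k" "n = m + 1"
  shows "NGG n (cycle_plus_twin m) = (real n + 1) / sqrt (real (halves_prod n))"
proof -
  let ?G = "cycle_plus_twin m"
  have G: "?G = cycle_graph m \<union> {(0, m), (m, 0), (2, m), (m, 2)}" unfolding cycle_plus_twin_def ..
  have X: "{(0, m), (m, 0), (2, m), (m, 2)} \<subseteq> {(0, m), (m, 0), (2, m), (m, 2)}"
    "sym {(0, m), (m, 0), (2, m), (m, 2)}" "(0, m) \<in> {(0, m), (m, 0), (2, m), (m, 2)}"
    by (auto simp: sym_def)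
  interpret conn_bip_graph n ?G "{i. i < m \<and> even i}"
    using conn_bip_graph_cycle_extension[OF _ _ G X] assms by simp
  define \<tau> where "\<tau> x = (if x = 1 then m else if x = m then 1 else x)" for x
  have inv: "\<tau> x < n \<and> \<tau> (\<tau> x) = x" if "x < n" for x
    using that assms unfolding \<tau>_def by auto
  have m3: "3 \<le> m" using assms by simp
  have hom: "(\<tau> x, \<tau> y) \<in> ?G" if xy: "(x, y) \<in> ?G" for x y
  proof (cases "(x, y) \<in> cycle_graph m")
    case True
    then have c: "x < m" "y < m"
      "y = x + 1 \<or> x = y + 1 \<or> (x = m - 1 \<and> y = 0) \<or> (y = m - 1 \<and> x = 0)"
      using cycle_graph_iff[OF m3] by auto
    show ?thesis
    proof (cases "x = 1 \<or> y = 1")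
      case True
      then show ?thesis using c assms(1) unfolding \<tau>_def G by auto
    next
      case False
      then have "\<tau> x = x" "\<tau> y = y" using c unfolding \<tau>_def by auto
      then show ?thesis using \<open>(x, y) \<in> cycle_graph m\<close> unfolding G by simp
    qed
  next
    case False
    then have "(x, y) \<in> {(0, m), (m, 0), (2, m), (m, 2)}" using xy unfolding G by auto
    moreover have "(0, 1) \<in> cycle_graph m" "(1, 0) \<in> cycle_graph m"
      "(2, 1) \<in> cycle_graph m" "(1, 2) \<in> cycle_graph m"
      using cycle_graph_iff[OF m3] assms(1) by auto
    ultimately show ?thesis using assms(1) unfolding \<tau>_def G by auto
  qed
  have swap: "ngg_term n ?G (\<tau> u, \<tau> v) = ngg_term n ?G (u, v)" if "u < n" "v < n" for u v
    unfolding ngg_term_def using nclose_involution[OF inv hom] that by simp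
  have cyc: "ngg_term n ?G (a, b) = 1 / sqrt (real (k * (k + 1)))" if "(a, b) \<in> cycle_graph m" for a b
    using ngg_term_cycle_edge[OF assms(1,2) G X that] assms(3) by simp
  have "(0, 1) \<in> cycle_graph m" "(1, 2) \<in> cycle_graph m" using cycle_graph_iff[OF m3] assms by auto
  then have "ngg_term n ?G (0, m) = 1 / sqrt (real (k * (k + 1)))"
    "ngg_term n ?G (2, m) = 1 / sqrt (real (k * (k + 1)))"
    using swap[of 0 1] swap[of 2 1] cyc ngg_term_swap assms unfolding \<tau>_def by auto
  moreover have "upper_edges ?G = upper_edges (cycle_graph m) \<union> {(0, m), (2, m)}"
    "(0, m) \<notin> upper_edges (cycle_graph m)" "(2, m) \<notin> upper_edges (cycle_graph m)"
    unfolding G upper_edges_Un using cycle_graph_subset[of m] assms(1) by (auto simp: upper_edges_def)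
  ultimately show ?thesis
    using sum_ngg_term_cycle_edges[OF _ _ G X] finite_upper_edges_cycle_graph assms
    by (simp add: NGG_eq_sum_ngg_term halves_prod_def add_divide_distrib)
qed

lemma exists_conn_bip_graph_NGG_eq_min:
  assumes "8 \<le> n"
  shows "\<exists>E S. conn_bip_graph n E S \<and> NGG n E = min_NGG_bip n"
proof (cases "even n")
  case True
  then obtain k where k: "n = 2 * k" by blast
  have "conn_bip_graph n (cycle_graph n) {i. even i}"
    using conn_bip_graph_cycle_graph assms True by simp
  moreover have "NGG n (cycle_graph n) = min_NGG_bip n"
    using NGG_cycle_graph[OF k] min_NGG_bip_eq[of n] True k assms by simp
  ultimately show ?thesis by blast
next
  case False
  then obtain k where k: "n = 2 * k + 1" using oddE by blast
  have m: "4 \<le> 2 * k" "even (2 * k)" using assms k by auto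
  have X: "sym {(0, 2 * k), (2 * k, 0)}" "sym {(0, 2 * k), (2 * k, 0), (2, 2 * k), (2 * k, 2)}"
    by (auto simp: sym_def)
  show ?thesis
  proof (cases "n \<le> 15")
    case True
    have "conn_bip_graph n (cycle_plus_pendant (2 * k)) {i. i < 2 * k \<and> even i}"
      using conn_bip_graph_cycle_extension[OF m cycle_plus_pendant_def _ X(1)] k by simp
    moreover have "NGG n (cycle_plus_pendant (2 * k)) = min_NGG_bip n"
      using NGG_cycle_plus_pendant[OF m(1) refl k] min_NGG_bip_eq[of n] False True by simp
    ultimately show ?thesis by blast
  next
    case big: False
    have "conn_bip_graph n (cycle_plus_twin (2 * k)) {i. i < 2 * k \<and> even i}"
      using conn_bip_graph_cycle_extension[OF m cycle_plus_twin_def _ X(2)] k by simp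
    moreover have "NGG n (cycle_plus_twin (2 * k)) = min_NGG_bip n"
      using NGG_cycle_plus_twin[OF m(1) refl k] min_NGG_bip_eq[of n] False big by simp
    ultimately show ?thesis by blast
  qed
qed

theorem corollary8:
  fixes n :: nat
  assumes "n \<ge> 8"
  shows "(\<exists>E. graph_on n E \<and> connected_graph n E \<and> bipartite_graph E
              \<and> NGG n E = min_NGG_bip n)
       \<and> (\<forall>E. graph_on n E \<and> connected_graph n E \<and> bipartite_graph E
              \<longrightarrow> min_NGG_bip n \<le> NGG n E)
       \<and> (\<exists>E. graph_on n E \<and> connected_graph n E \<and> bipartite_graph E
              \<and> GG n E / sqrt (real n - 2) = min_NGG_bip n)
       \<and> (\<forall>E. graph_on n E \<and> connected_graph n E \<and> bipartite_graph E
              \<longrightarrow> min_NGG_bip n \<le> GG n E / sqrt (real n - 2))"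
proof -
  have char: "graph_on n E \<and> connected_graph n E \<and> bipartite_graph E \<longleftrightarrow> (\<exists>S. conn_bip_graph n E S)"
    for E
    using assms by (auto simp: conn_bip_graph_def bipartite_graph_def)
  have bounds: "min_NGG_bip n \<le> NGG n E \<and> GG n E / sqrt (real n - 2) = NGG n E"
    if E: "graph_on n E \<and> connected_graph n E \<and> bipartite_graph E" for E
  proof -
    obtain S where "conn_bip_graph n E S" using E char[of E] by blast
    then show ?thesis
      using conn_bip_graph.min_NGG_bip_le_NGG conn_bip_graph.GG_eq_sqrt_mult_NGG assms by fastforce
  qed
  obtain E S where "conn_bip_graph n E S" and E: "NGG n E = min_NGG_bip n"
    using exists_conn_bip_graph_NGG_eq_min[OF assms] by blast
  then have "graph_on n E \<and> connected_graph n E \<and> bipartite_graph E" using char[of E] by blast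
  with E bounds[OF this] show ?thesis
    by (intro conjI) (use bounds in auto)
qed

end
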